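(* Any two countable dense subsets of the Urysohn space $\mathbb U$ are almost isometric.
   Context: $\mathbb U$ denotes Urysohn's universal separable metric space: the unique (up to isometry) complete separable metric space such that for every finite metric space $F=\{x_0,\dots,x_n\}$, every isometry $\{x_0,\dots,x_{n-1}\}\to\mathbb U$ extends to an isometry $F\to\mathbb U$. For $\lambda>1$, an injection $f$ is $\lambda$-bi-Lipschitz if for all distinct $a,b$ in its domain $d(f(a),f(b))<\lambda d(a,b)$ and $d(a,b)<\lambda d(f(a),f(b))$. Two metric spaces $X,Y$ are almost isometric if for every $\lambda>1$ there is a $\lambda$-bi-Lipschitz bijection from $X$ onto $Y$. *)

theory Defs
  imports "HOL-Analysis.Analysis"
begin

text \<open>A finite metric space with n+1 points is encoded as {0..n} with a distance
  function d (metric axioms on {0..n}).\<close>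
definition fin_metric :: "nat \<Rightarrow> (nat \<Rightarrow> nat \<Rightarrow> real) \<Rightarrow> bool" where
  "fin_metric n d \<longleftrightarrow>
     (\<forall>i\<le>n. \<forall>j\<le>n. (d i j = 0 \<longleftrightarrow> i = j) \<and> d i j = d j i) \<and>
     (\<forall>i\<le>n. \<forall>j\<le>n. \<forall>k\<le>n. d i k \<le> d i j + d j k)"

definition finite_extension_property :: "'a::metric_space itself \<Rightarrow> bool" where
  "finite_extension_property _ \<longleftrightarrow>
     (\<forall>n d (f :: nat \<Rightarrow> 'a). fin_metric n d \<and>
        (\<forall>i<n. \<forall>j<n. dist (f i) (f j) = d i j) \<longrightarrow>
        (\<exists>g :: nat \<Rightarrow> 'a. (\<forall>i<n. g i = f i) \<and>
            (\<forall>i\<le>n. \<forall>j\<le>n. dist (g i) (g j) = d i j)))"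

definition is_urysohn :: "'a::metric_space itself \<Rightarrow> bool" where
  "is_urysohn T \<longleftrightarrow> complete (UNIV :: 'a set) \<and>
     (\<exists>D :: 'a set. countable D \<and> closure D = UNIV) \<and>
     finite_extension_property T"

definition bi_lipschitz :: "real \<Rightarrow> ('a::metric_space \<Rightarrow> 'b::metric_space) \<Rightarrow> 'a set \<Rightarrow> bool" where
  "bi_lipschitz lam f A \<longleftrightarrow> inj_on f A \<and>
     (\<forall>a\<in>A. \<forall>b\<in>A. a \<noteq> b \<longrightarrow>
        dist (f a) (f b) < lam * dist a b \<and> dist a b < lam * dist (f a) (f b))"

definition almost_isometric :: "'a::metric_space set \<Rightarrow> 'b::metric_space set \<Rightarrow> bool" where
  "almost_isometric X Y \<longleftrightarrow>
     (\<forall>lam > 1. \<exists>f. bij_betw f X Y \<and> bi_lipschitz lam f X)"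

end

theory Submission
  imports Defs
begin

(* Back and forth. Call a finite relation R between the two sets good if it is the graph of a
   partial bijection satisfying the strict lam-bi-Lipschitz inequalities. A good R extends to any
   new point x of the first set: the admissible images of x form an open set, and this set is
   nonempty because, for a Lipschitz constant mu < lam of R, the function
   z |-> min over (a, b) in R of (mu * d(x, a) + d(z, b)) is a Katetov function on the finite
   set snd ` R, hence realized by a point of U; being open, it meets the dense second set.
   Passing to converse relations gives the backward step, and enumerating both countable sets
   yields an increasing chain of good relations whose union is the graph of the required
   bijection. *)

definition katetov_on :: "'a::metric_space set \<Rightarrow> ('a \<Rightarrow> real) \<Rightarrow> bool" where
  "katetov_on A G \<longleftrightarrow> (\<forall>a\<in>A. \<forall>b\<in>A. G a \<le> G b + dist a b \<and> dist a b \<le> G a + G b)"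

lemma katetov_on_Min_dist:
  fixes b :: "'i \<Rightarrow> 'a::metric_space"
  assumes "finite I" "I \<noteq> {}"
    and wb: "\<And>i j. i \<in> I \<Longrightarrow> j \<in> I \<Longrightarrow> dist (b i) (b j) \<le> w i + w j"
  shows "katetov_on A (\<lambda>z. Min ((\<lambda>i. w i + dist z (b i)) ` I))"
proof -
  define G where "G z = Min ((\<lambda>i. w i + dist z (b i)) ` I)" for z
  have G_le: "G z \<le> w i + dist z (b i)" if "i \<in> I" for z i
    unfolding G_def using assms(1) that by (intro Min_le) auto
  have G_attained: "\<exists>i\<in>I. G z = w i + dist z (b i)" for z
  proof -
    have "G z \<in> (\<lambda>i. w i + dist z (b i)) ` I"
      unfolding G_def using assms(1,2) by (intro Min_in) auto
    then show ?thesis by auto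
  qed
  have "G z \<le> G z' + dist z z' \<and> dist z z' \<le> G z + G z'" for z z'
  proof -
    obtain i where i: "i \<in> I" "G z = w i + dist z (b i)" using G_attained by blast
    obtain j where j: "j \<in> I" "G z' = w j + dist z' (b j)" using G_attained by blast
    have "G z \<le> w j + dist z (b j)" using G_le[OF j(1)] .
    also have "\<dots> \<le> G z' + dist z z'"
      using j(2) dist_triangle[of z "b j" z'] by (simp add: dist_commute)
    finally have "G z \<le> G z' + dist z z'" .
    moreover have "dist z z' \<le> dist z (b i) + dist (b i) (b j) + dist (b j) z'"
      using dist_triangle[of z z' "b i"] dist_triangle[of "b i" z' "b j"] by linarith
    then have "dist z z' \<le> G z + G z'"
      using i j wb[OF i(1) j(1)] by (simp add: dist_commute)
    ultimately show ?thesis ..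
  qed
  then show ?thesis unfolding katetov_on_def G_def by blast
qed

lemma katetov_realizable:
  fixes A :: "'a::metric_space set"
  assumes fep: "finite_extension_property TYPE('a)" and "finite A"
    and kat: "katetov_on A G" and pos: "\<And>a. a \<in> A \<Longrightarrow> 0 < G a"
  shows "\<exists>z. \<forall>a\<in>A. dist z a = G a"
proof -
  define n where "n = card A"
  obtain e where e: "bij_betw e {0..<n} A"
    using ex_bij_betw_nat_finite[OF \<open>finite A\<close>] n_def by blast
  have eA: "e i \<in> A" if "i < n" for i
    using e that by (auto simp: bij_betw_def)
  \<comment> \<open>the point to be realized gets index \<open>n\<close>\<close>
  define d where "d i j = (if i < n \<and> j < n then dist (e i) (e j)
     else if i < n then G (e i) else if j < n then G (e j) else 0)" for i j
  have "fin_metric n d"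
    unfolding fin_metric_def
  proof (intro conjI allI impI)
    fix i j assume "i \<le> n" "j \<le> n"
    moreover have "e i = e j \<Longrightarrow> i < n \<Longrightarrow> j < n \<Longrightarrow> i = j"
      using e by (auto simp: bij_betw_def inj_on_def)
    ultimately show "d i j = 0 \<longleftrightarrow> i = j"
      using pos[OF eA, of i] pos[OF eA, of j] by (auto simp: d_def)
    show "d i j = d j i" by (simp add: d_def dist_commute)
  next
    fix i j k assume "i \<le> n" "j \<le> n" "k \<le> n"
    have "G a \<le> G b + dist a b" "dist a b \<le> G a + G b" if "a \<in> A" "b \<in> A" for a b
      using kat that unfolding katetov_on_def by auto
    then have "i < n \<Longrightarrow> j < n \<Longrightarrow> G (e i) \<le> G (e j) + dist (e i) (e j)"
      "j < n \<Longrightarrow> k < n \<Longrightarrow> G (e k) \<le> G (e j) + dist (e j) (e k)"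
      "i < n \<Longrightarrow> k < n \<Longrightarrow> dist (e i) (e k) \<le> G (e i) + G (e k)"
      using eA by (metis dist_commute)+
    moreover have "i < n \<Longrightarrow> 0 < G (e i)" "j < n \<Longrightarrow> 0 < G (e j)" "k < n \<Longrightarrow> 0 < G (e k)"
      using pos eA by auto
    ultimately show "d i k \<le> d i j + d j k"
      using dist_triangle[of "e i" "e k" "e j"] unfolding d_def by auto
  qed
  moreover have "\<forall>i<n. \<forall>j<n. dist (e i) (e j) = d i j" by (simp add: d_def)
  ultimately obtain g where g: "\<forall>i<n. g i = e i" "\<forall>i\<le>n. \<forall>j\<le>n. dist (g i) (g j) = d i j"
    using fep unfolding finite_extension_property_def by blast
  have "dist (g n) (e i) = G (e i)" if "i < n" for i
  proof -
    have "dist (g n) (g i) = d n i" using g(2) that by simp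
    then show ?thesis using g(1) that by (simp add: d_def)
  qed
  then have "\<forall>a\<in>A. dist (g n) a = G a"
    using e by (auto simp: bij_betw_def)
  then show ?thesis ..
qed

definition bilip_rel :: "real \<Rightarrow> ('a::metric_space \<times> 'b::metric_space) set \<Rightarrow> bool" where
  "bilip_rel lam R \<longleftrightarrow> (\<forall>a b a' b'. (a, b) \<in> R \<longrightarrow> (a', b') \<in> R \<longrightarrow>
     (a = a' \<longleftrightarrow> b = b') \<and>
     (a \<noteq> a' \<longrightarrow> dist b b' < lam * dist a a' \<and> dist a a' < lam * dist b b'))"

lemma bilip_relD:
  assumes "bilip_rel lam R" "(a, b) \<in> R" "(a', b') \<in> R"
  shows "a = a' \<longleftrightarrow> b = b'"
    and "a \<noteq> a' \<Longrightarrow> dist b b' < lam * dist a a'"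
    and "a \<noteq> a' \<Longrightarrow> dist a a' < lam * dist b b'"
  using assms unfolding bilip_rel_def by blast+

lemma bilip_rel_dist_le:
  assumes "bilip_rel lam R" "(a, b) \<in> R" "(a', b') \<in> R"
  shows "dist b b' \<le> lam * dist a a'" and "dist a a' \<le> lam * dist b b'"
  using bilip_relD[OF assms] by (cases "a = a'"; force)+

lemma bilip_rel_empty: "bilip_rel lam {}"
  by (simp add: bilip_rel_def)

lemma bilip_rel_converse: "bilip_rel lam (converse R) \<longleftrightarrow> bilip_rel lam R"
  unfolding bilip_rel_def by (auto simp: dist_commute)

lemma bilip_rel_UN_incseq:
  assumes "incseq S" "\<And>n. bilip_rel lam (S n)"
  shows "bilip_rel lam (\<Union>n. S n)"
  unfolding bilip_rel_def
proof (intro allI impI)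
  fix a b a' b' assume "(a, b) \<in> (\<Union>n. S n)" "(a', b') \<in> (\<Union>n. S n)"
  then obtain m k where "(a, b) \<in> S m" "(a', b') \<in> S k" by blast
  then have "(a, b) \<in> S (max m k)" "(a', b') \<in> S (max m k)"
    using monoD[OF assms(1), of m "max m k"] monoD[OF assms(1), of k "max m k"] by auto
  then show "(a = a' \<longleftrightarrow> b = b') \<and>
      (a \<noteq> a' \<longrightarrow> dist b b' < lam * dist a a' \<and> dist a a' < lam * dist b b')"
    using assms(2)[of "max m k"] unfolding bilip_rel_def by blast
qed

lemma bilip_rel_imp_bi_lipschitz_bij:
  assumes "bilip_rel lam F" "fst ` F = X" "snd ` F = Y"
  shows "\<exists>f. bij_betw f X Y \<and> bi_lipschitz lam f X"
proof -
  define f where "f a = (SOME b. (a, b) \<in> F)" for a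
  have graph: "(a, f a) \<in> F" if "a \<in> X" for a
    unfolding f_def
  proof (rule someI_ex)
    show "\<exists>b. (a, b) \<in> F" using that assms(2) by auto
  qed
  have "inj_on f X"
  proof (rule inj_onI)
    fix a a' assume "a \<in> X" "a' \<in> X" "f a = f a'"
    then show "a = a'" using bilip_relD(1)[OF assms(1) graph graph] by blast
  qed
  moreover have "f ` X = Y"
  proof
    show "f ` X \<subseteq> Y" using graph assms(3) by force
    show "Y \<subseteq> f ` X"
    proof
      fix b assume "b \<in> Y"
      then obtain a where "(a, b) \<in> F" using assms(3) by force
      moreover from this have "a \<in> X" using assms(2) by force
      ultimately show "b \<in> f ` X" using bilip_relD(1)[OF assms(1) graph] by blast
    qed
  qed
  moreover have "dist (f a) (f a') < lam * dist a a' \<and> dist a a' < lam * dist (f a) (f a')"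
    if "a \<in> X" "a' \<in> X" "a \<noteq> a'" for a a'
    using bilip_relD(2,3)[OF assms(1) graph graph] that by blast
  ultimately show ?thesis unfolding bij_betw_def bi_lipschitz_def by blast
qed

definition bilip_targets :: "real \<Rightarrow> ('a::metric_space \<times> 'b::metric_space) set \<Rightarrow> 'a \<Rightarrow> 'b set" where
  "bilip_targets lam R x = {z. \<forall>(a, b)\<in>R. dist z b < lam * dist x a \<and> dist x a < lam * dist z b}"

lemma open_bilip_targets:
  assumes "finite R"
  shows "open (bilip_targets lam R x)"
proof -
  have "bilip_targets lam R x =
      (\<Inter>(a, b)\<in>R. {z. dist z b < lam * dist x a} \<inter> {z. dist x a < lam * dist z b})"
    unfolding bilip_targets_def by auto
  moreover have "open ({z. dist z b < lam * dist x a} \<inter> {z. dist x a < lam * dist z b})" for a b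
    by (intro open_Int open_Collect_less continuous_intros)
  ultimately show ?thesis
    using assms by (auto intro!: open_INT)
qed

lemma bilip_rel_insert:
  assumes "bilip_rel lam R" "x \<notin> fst ` R" "z \<in> bilip_targets lam R x"
  shows "bilip_rel lam (insert (x, z) R)"
proof -
  have target: "dist z b < lam * dist x a" "dist x a < lam * dist z b" if "(a, b) \<in> R" for a b
    using assms(3) that unfolding bilip_targets_def by auto
  have "x \<noteq> a" "z \<noteq> b" if "(a, b) \<in> R" for a b
    using assms(2) that target(2)[OF that] by force+
  then show ?thesis
    using assms(1) target unfolding bilip_rel_def by (auto simp: dist_commute)
qed

lemma finite_bilip_rel_lipschitz_slack:
  fixes R :: "('a::metric_space \<times> 'b::metric_space) set"
  assumes "finite R" "bilip_rel lam R" "1 < lam"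
  obtains mu where "1 < mu" "mu < lam"
    "\<And>a b a' b'. (a, b) \<in> R \<Longrightarrow> (a', b') \<in> R \<Longrightarrow> dist b b' \<le> mu * dist a a'"
proof -
  define ratio :: "('a \<times> 'b) \<times> ('a \<times> 'b) \<Rightarrow> real"
    where "ratio = (\<lambda>((a, b), (a', b')). if a = a' then 1 else dist b b' / dist a a')"
  define M where "M = Max (insert 1 (ratio ` (R \<times> R)))"
  have "ratio pq < lam" if pqR: "pq \<in> R \<times> R" for pq
  proof -
    obtain a b a' b' where pq: "pq = ((a, b), (a', b'))" "(a, b) \<in> R" "(a', b') \<in> R"
      using pqR by auto
    show ?thesis
    proof (cases "a = a'")
      case True
      then show ?thesis using assms(3) pq(1) by (simp add: ratio_def)
    next
      case False
      then show ?thesis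
        using bilip_relD(2)[OF assms(2) pq(2,3)] pq(1) by (simp add: ratio_def divide_less_eq)
    qed
  qed
  then have M: "M < lam" "1 \<le> M"
    unfolding M_def using assms(1,3) by auto
  have M_lipschitz: "dist b b' \<le> M * dist a a'" if "(a, b) \<in> R" "(a', b') \<in> R" for a b a' b'
  proof (cases "a = a'")
    case True
    then show ?thesis using bilip_relD(1)[OF assms(2) that] by simp
  next
    case False
    have "ratio ((a, b), (a', b')) \<le> M"
      unfolding M_def using assms(1) that by (intro Max_ge) auto
    then show ?thesis using False by (simp add: ratio_def divide_le_eq mult.commute)
  qed
  show ?thesis
  proof (rule that[of "(M + lam) / 2"])
    fix a b a' b' assume "(a, b) \<in> R" "(a', b') \<in> R"
    then have "dist b b' \<le> M * dist a a'" by (rule M_lipschitz)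
    also have "\<dots> \<le> (M + lam) / 2 * dist a a'"
      using M by (intro mult_right_mono) auto
    finally show "dist b b' \<le> (M + lam) / 2 * dist a a'" .
  qed (use M in auto)
qed

lemma bilip_targets_nonempty:
  fixes R :: "('b::metric_space \<times> 'a::metric_space) set"
  assumes fep: "finite_extension_property TYPE('a)"
    and "1 < lam" "finite R" "bilip_rel lam R" "x \<notin> fst ` R"
  shows "bilip_targets lam R x \<noteq> {}"
proof (cases "R = {}")
  case True
  then show ?thesis by (simp add: bilip_targets_def)
next
  case False
  obtain mu where mu: "1 < mu" "mu < lam"
    and mu_lipschitz:
      "\<And>a b a' b'. (a, b) \<in> R \<Longrightarrow> (a', b') \<in> R \<Longrightarrow> dist b b' \<le> mu * dist a a'"
    using finite_bilip_rel_lipschitz_slack assms(2-4) by blast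
  have x_apart: "0 < dist x a" if "(a, b) \<in> R" for a b
    using assms(5) that by (metis fst_conv image_eqI zero_less_dist_iff)
  define G where "G z = Min ((\<lambda>p. mu * dist x (fst p) + dist z (snd p)) ` R)" for z
  have "dist (snd p) (snd q) \<le> mu * dist x (fst p) + mu * dist x (fst q)"
    if "p \<in> R" "q \<in> R" for p q
  proof -
    have "dist (snd p) (snd q) \<le> mu * dist (fst p) (fst q)"
      using mu_lipschitz[of "fst p" "snd p" "fst q" "snd q"] that by simp
    also have "\<dots> \<le> mu * (dist x (fst p) + dist x (fst q))"
      using mu by (intro mult_left_mono dist_triangle3) auto
    finally show ?thesis by (simp add: distrib_left)
  qed
  then have G_katetov: "katetov_on (snd ` R) G"
    unfolding G_def
    by (rule katetov_on_Min_dist[where w = "\<lambda>p. mu * dist x (fst p)" and b = snd,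
          OF \<open>finite R\<close> False])
  have G_pos: "0 < G z" for z
  proof -
    have "0 < mu * dist x (fst p) + dist z (snd p)" if "p \<in> R" for p
      using mu x_apart[of "fst p" "snd p"] that by (simp add: add_pos_nonneg)
    then show ?thesis
      unfolding G_def using \<open>finite R\<close> False by (simp add: Min_gr_iff)
  qed
  obtain z where z: "\<And>b. b \<in> snd ` R \<Longrightarrow> dist z b = G b"
    using katetov_realizable[OF fep finite_imageI[OF \<open>finite R\<close>] G_katetov G_pos] by blast
  have "dist z b < lam * dist x a \<and> dist x a < lam * dist z b" if ab: "(a, b) \<in> R" for a b
  proof
    have "b \<in> snd ` R"
      using ab by (rule rev_image_eqI) simp
    then have zb: "dist z b = G b"
      by (rule z)
    also have "\<dots> \<le> mu * dist x a + dist b b"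
      unfolding G_def using \<open>finite R\<close>
      by (intro Min_le finite_imageI rev_image_eqI[OF ab]) auto
    also have "\<dots> < lam * dist x a"
      using mu x_apart[OF ab] by simp
    finally show "dist z b < lam * dist x a" .
    have "G b \<in> (\<lambda>p. mu * dist x (fst p) + dist b (snd p)) ` R"
      unfolding G_def using \<open>finite R\<close> False by (intro Min_in) auto
    then obtain a' b' where ab': "(a', b') \<in> R" "dist z b = mu * dist x a' + dist b b'"
      using zb by auto
    have "dist x a \<le> dist x a' + dist a' a"
      by (rule dist_triangle)
    also have "\<dots> < lam * mu * dist x a' + lam * dist b b'"
    proof (rule add_less_le_mono)
      show "dist x a' < lam * mu * dist x a'"
        using x_apart[OF ab'(1)] mu \<open>1 < lam\<close> by (simp add: less_1_mult)
      show "dist a' a \<le> lam * dist b b'"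
        using bilip_rel_dist_le(2)[OF assms(4) ab ab'(1)] by (simp add: dist_commute)
    qed
    also have "\<dots> = lam * dist z b"
      using ab'(2) by (simp add: algebra_simps)
    finally show "dist x a < lam * dist z b" .
  qed
  then have "z \<in> bilip_targets lam R x"
    unfolding bilip_targets_def by blast
  then show ?thesis by blast
qed

lemma bilip_rel_extend_forth:
  fixes R :: "('b::metric_space \<times> 'a::metric_space) set" and Y :: "'a set"
  assumes "finite_extension_property TYPE('a)" "closure Y = UNIV"
    and "1 < lam" "finite R" "bilip_rel lam R" "x \<notin> fst ` R"
  shows "\<exists>y\<in>Y. bilip_rel lam (insert (x, y) R)"
proof -
  have "bilip_targets lam R x \<inter> closure Y \<noteq> {}"
    using bilip_targets_nonempty[OF assms(1,3-6)] assms(2) by simp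
  then have "bilip_targets lam R x \<inter> Y \<noteq> {}"
    using open_Int_closure_eq_empty[OF open_bilip_targets[OF \<open>finite R\<close>]] by blast
  then show ?thesis
    using bilip_rel_insert[OF assms(5,6)] by blast
qed

lemma bilip_rel_extend_back:
  fixes R :: "('a::metric_space \<times> 'b::metric_space) set" and X :: "'a set"
  assumes "finite_extension_property TYPE('a)" "closure X = UNIV"
    and "1 < lam" "finite R" "bilip_rel lam R" "y \<notin> snd ` R"
  shows "\<exists>x\<in>X. bilip_rel lam (insert (x, y) R)"
proof -
  have "y \<notin> fst ` converse R"
    using assms(6) by force
  moreover have "finite (converse R)" "bilip_rel lam (converse R)"
    using assms(4,5) bilip_rel_converse by auto
  ultimately obtain x where "x \<in> X" "bilip_rel lam (insert (y, x) (converse R))"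
    using bilip_rel_extend_forth[OF assms(1-3)] by blast
  moreover have "insert (y, x) (converse R) = converse (insert (x, y) R)"
    by auto
  ultimately show ?thesis
    using bilip_rel_converse by metis
qed

lemma back_and_forth:
  fixes X :: "'a set" and Y :: "'b set" and P :: "('a \<times> 'b) set \<Rightarrow> bool"
  assumes "countable X" "X \<noteq> {}" "countable Y" "Y \<noteq> {}" "P {}"
    and forth_step: "\<And>R x. P R \<Longrightarrow> finite R \<Longrightarrow> x \<in> X \<Longrightarrow> x \<notin> fst ` R \<Longrightarrow>
      \<exists>y\<in>Y. P (insert (x, y) R)"
    and back_step: "\<And>R y. P R \<Longrightarrow> finite R \<Longrightarrow> y \<in> Y \<Longrightarrow> y \<notin> snd ` R \<Longrightarrow>
      \<exists>x\<in>X. P (insert (x, y) R)"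
  obtains S where "incseq S" "\<And>n. P (S n)" "fst ` (\<Union>n. S n) = X" "snd ` (\<Union>n. S n) = Y"
proof -
  define Inv where "Inv R \<longleftrightarrow> P R \<and> finite R \<and> R \<subseteq> X \<times> Y" for R
  have extend_fst: "\<exists>R'. R \<subseteq> R' \<and> Inv R' \<and> x \<in> fst ` R'"
    if R: "Inv R" and x: "x \<in> X" for R x
  proof (cases "x \<in> fst ` R")
    case False
    then obtain y where "y \<in> Y" "P (insert (x, y) R)"
      using forth_step R x unfolding Inv_def by blast
    then show ?thesis
      using R x unfolding Inv_def by (intro exI[of _ "insert (x, y) R"]) auto
  qed (use R in blast)
  have extend_snd: "\<exists>R'. R \<subseteq> R' \<and> Inv R' \<and> y \<in> snd ` R'"
    if R: "Inv R" and y: "y \<in> Y" for R y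
  proof (cases "y \<in> snd ` R")
    case False
    then obtain x where "x \<in> X" "P (insert (x, y) R)"
      using back_step R y unfolding Inv_def by blast
    then show ?thesis
      using R y unfolding Inv_def by (intro exI[of _ "insert (x, y) R"]) auto
  qed (use R in blast)
  have extend_both: "\<exists>R''. R \<subseteq> R'' \<and> Inv R'' \<and> x \<in> fst ` R'' \<and> y \<in> snd ` R''"
    if R: "Inv R" and x: "x \<in> X" and y: "y \<in> Y" for R x y
  proof -
    obtain R' where R': "R \<subseteq> R'" "Inv R'" "x \<in> fst ` R'"
      using extend_fst R x by blast
    obtain R'' where R'': "R' \<subseteq> R''" "Inv R''" "y \<in> snd ` R''"
      using extend_snd R'(2) y by blast
    from R' R'' show ?thesis by blast
  qed
  define ext where
    "ext R x y = (SOME R''. R \<subseteq> R'' \<and> Inv R'' \<and> x \<in> fst ` R'' \<and> y \<in> snd ` R'')" for R x y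
  have ext: "R \<subseteq> ext R x y \<and> Inv (ext R x y) \<and> x \<in> fst ` ext R x y \<and> y \<in> snd ` ext R x y"
    if "Inv R" "x \<in> X" "y \<in> Y" for R x y
    unfolding ext_def by (rule someI_ex) (rule extend_both[OF that])
  define S where "S = rec_nat {} (\<lambda>n R. ext R (from_nat_into X n) (from_nat_into Y n))"
  have S_Suc: "S (Suc n) = ext (S n) (from_nat_into X n) (from_nat_into Y n)" for n
    by (simp add: S_def)
  have Inv_S: "Inv (S n)" for n
  proof (induction n)
    case 0
    then show ?case by (simp add: S_def Inv_def \<open>P {}\<close>)
  next
    case (Suc n)
    then show ?case
      using ext[OF Suc.IH from_nat_into[OF assms(2)] from_nat_into[OF assms(4)]]
      by (simp add: S_Suc)
  qed
  have S_step: "S n \<subseteq> S (Suc n) \<and>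
      from_nat_into X n \<in> fst ` S (Suc n) \<and> from_nat_into Y n \<in> snd ` S (Suc n)" for n
    using ext[OF Inv_S from_nat_into[OF assms(2)] from_nat_into[OF assms(4)]]
    by (simp add: S_Suc)
  show ?thesis
  proof
    show "incseq S"
      using S_step by (intro incseq_SucI) blast
    show "P (S n)" for n
      using Inv_S unfolding Inv_def by blast
    have "(\<Union>n. S n) \<subseteq> X \<times> Y"
      using Inv_S unfolding Inv_def by blast
    then have "fst ` (\<Union>n. S n) \<subseteq> X" "snd ` (\<Union>n. S n) \<subseteq> Y"
      by auto
    moreover have "X \<subseteq> fst ` (\<Union>n. S n)"
    proof
      fix x assume "x \<in> X"
      then have "x \<in> fst ` S (Suc (to_nat_on X x))"
        using S_step from_nat_into_to_nat_on[OF assms(1)] by metis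
      then show "x \<in> fst ` (\<Union>n. S n)" by blast
    qed
    moreover have "Y \<subseteq> snd ` (\<Union>n. S n)"
    proof
      fix y assume "y \<in> Y"
      then have "y \<in> snd ` S (Suc (to_nat_on Y y))"
        using S_step from_nat_into_to_nat_on[OF assms(3)] by metis
      then show "y \<in> snd ` (\<Union>n. S n)" by blast
    qed
    ultimately show "fst ` (\<Union>n. S n) = X" "snd ` (\<Union>n. S n) = Y"
      by auto
  qed
qed

theorem theorem3p6:
  fixes X Y :: "'a::metric_space set"
  assumes "is_urysohn TYPE('a)"
    and "countable X" and "closure X = UNIV"
    and "countable Y" and "closure Y = UNIV"
  shows "almost_isometric X Y"
  unfolding almost_isometric_def
proof (intro allI impI)
  fix lam :: real assume "lam > 1"
  have fep: "finite_extension_property TYPE('a)"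
    using assms(1) unfolding is_urysohn_def by blast
  have nonempty: "X \<noteq> {}" "Y \<noteq> {}"
    using assms(3,5) by auto
  obtain S where "incseq S" "\<And>n. bilip_rel lam (S n)"
    and "fst ` (\<Union>n. S n) = X" "snd ` (\<Union>n. S n) = Y"
  proof (rule back_and_forth[where P = "bilip_rel lam",
        OF assms(2) nonempty(1) assms(4) nonempty(2) bilip_rel_empty])
    show "\<exists>y\<in>Y. bilip_rel lam (insert (x, y) R)"
      if "bilip_rel lam R" "finite R" "x \<in> X" "x \<notin> fst ` R" for R x
      using bilip_rel_extend_forth[OF fep assms(5) \<open>lam > 1\<close>] that by blast
    show "\<exists>x\<in>X. bilip_rel lam (insert (x, y) R)"
      if "bilip_rel lam R" "finite R" "y \<in> Y" "y \<notin> snd ` R" for R y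
      using bilip_rel_extend_back[OF fep assms(3) \<open>lam > 1\<close>] that by blast
  qed (rule that)
  then show "\<exists>f. bij_betw f X Y \<and> bi_lipschitz lam f X"
    using bilip_rel_imp_bi_lipschitz_bij bilip_rel_UN_incseq by blast
qed

end
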